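(* Let $\mathcal{T}$ be a tangle of order $k$ in a connectivity system $(E,\lambda)$. Let $X$ be a $\mathcal{T}$-strong $k$-separating set, and let $\mathcal{F}$ be the set of fully closed $k$-separating sets that contain $X$. Then $\bigcap \mathcal{F}$ is a fully closed $k$-separating set that contains $X$.
   Context: A connectivity system is a pair $(E,\lambda)$ with $E$ finite and $\lambda$ an integer-valued symmetric ($\lambda(X)=\lambda(E-X)$) submodular function on subsets of $E$. $X$ is $k$-separating if $\lambda(X)\le k$. A tangle of order $k$ is a collection $\mathcal T$ of subsets of $E$ with (T1) $\lambda(A)<k$ for $A\in\mathcal T$; (T2) if $\lambda(A)\le k-1$ then $A\in\mathcal T$ or $E-A\in\mathcal T$; (T3) $A\cup B\cup C\ne E$ for $A,B,C\in\mathcal T$; (T4) $E-\{e\}\notin\mathcal T$ for $e\in E$. A set is $\mathcal T$-weak if contained in a member of $\mathcal T$, and $\mathcal T$-strong otherwise. A $\mathcal T$-strong $k$-separating set $X$ is fully closed if $X\cup Y$ is not $k$-separating for every nonempty $\mathcal T$-weak $Y\subseteq E-X$. *)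

theory Defs
  imports Main
begin

definition connectivity_system :: "'a set \<Rightarrow> ('a set \<Rightarrow> int) \<Rightarrow> bool" where
  "connectivity_system E lam \<longleftrightarrow> finite E \<and>
     (\<forall>X. X \<subseteq> E \<longrightarrow> lam X = lam (E - X)) \<and>
     (\<forall>X Y. X \<subseteq> E \<longrightarrow> Y \<subseteq> E \<longrightarrow> lam (X \<union> Y) + lam (X \<inter> Y) \<le> lam X + lam Y)"

definition k_separating :: "('a set \<Rightarrow> int) \<Rightarrow> int \<Rightarrow> 'a set \<Rightarrow> bool" where
  "k_separating lam k X \<longleftrightarrow> lam X \<le> k"

definition tangle :: "'a set \<Rightarrow> ('a set \<Rightarrow> int) \<Rightarrow> int \<Rightarrow> 'a set set \<Rightarrow> bool" where
  "tangle E lam k T \<longleftrightarrow> T \<subseteq> Pow E \<and>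
     (\<forall>A\<in>T. lam A < k) \<and>
     (\<forall>A. A \<subseteq> E \<longrightarrow> lam A \<le> k - 1 \<longrightarrow> A \<in> T \<or> E - A \<in> T) \<and>
     (\<forall>A\<in>T. \<forall>B\<in>T. \<forall>C\<in>T. A \<union> B \<union> C \<noteq> E) \<and>
     (\<forall>e\<in>E. E - {e} \<notin> T)"

definition T_weak :: "'a set set \<Rightarrow> 'a set \<Rightarrow> bool" where
  "T_weak T Y \<longleftrightarrow> (\<exists>A\<in>T. Y \<subseteq> A)"

definition T_strong :: "'a set set \<Rightarrow> 'a set \<Rightarrow> bool" where
  "T_strong T Y \<longleftrightarrow> \<not> T_weak T Y"

definition fully_closed :: "'a set \<Rightarrow> ('a set \<Rightarrow> int) \<Rightarrow> int \<Rightarrow> 'a set set \<Rightarrow> 'a set \<Rightarrow> bool" where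
  "fully_closed E lam k T X \<longleftrightarrow> X \<subseteq> E \<and> T_strong T X \<and> k_separating lam k X \<and>
     (\<forall>Y. Y \<subseteq> E - X \<longrightarrow> Y \<noteq> {} \<longrightarrow> T_weak T Y \<longrightarrow> \<not> k_separating lam k (X \<union> Y))"

end

theory Submission
  imports Defs
begin

text \<open>Starting from \<open>X\<close>, keep adding nonempty weak sets \<open>Y\<close> with \<open>X \<union> Y\<close> still
  \<open>k\<close>-separating; the result stays strong and the process stops at a fully closed set \<open>M\<close>.
  Every fully closed \<open>Z \<supseteq> X\<close> swallows each added \<open>Y\<close>, so \<open>M\<close> is the least fully closed
  superset of \<open>X\<close> and hence equals the intersection.\<close>

lemma connectivity_system_finite:
  "connectivity_system E lam \<Longrightarrow> finite E"
  unfolding connectivity_system_def by simp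

lemma connectivity_system_sym:
  "connectivity_system E lam \<Longrightarrow> X \<subseteq> E \<Longrightarrow> lam (E - X) = lam X"
  unfolding connectivity_system_def by metis

lemma connectivity_system_submod:
  "connectivity_system E lam \<Longrightarrow> X \<subseteq> E \<Longrightarrow> Y \<subseteq> E \<Longrightarrow>
    lam (X \<union> Y) + lam (X \<inter> Y) \<le> lam X + lam Y"
  unfolding connectivity_system_def by blast

lemma connectivity_system_lam_ground_le:
  assumes cs: "connectivity_system E lam" and Z: "Z \<subseteq> E"
  shows "lam E \<le> lam Z"
proof -
  have "lam (Z \<union> (E - Z)) + lam (Z \<inter> (E - Z)) \<le> lam Z + lam (E - Z)"
    using connectivity_system_submod[OF cs Z, of "E - Z"] by blast
  moreover have "Z \<union> (E - Z) = E" "Z \<inter> (E - Z) = {}" using Z by auto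
  moreover have "lam {} = lam E"
    using connectivity_system_sym[OF cs, of E] by simp
  ultimately show ?thesis using connectivity_system_sym[OF cs Z] by simp
qed

text \<open>Submodularity makes \<open>Z \<inter> (W \<union> Y)\<close> a strong set of order less than \<open>k\<close>, so
  its complement lies in the tangle; then \<open>E - Z\<close> is weak, and it is nonempty as soon
  as \<open>Y \<not>\<subseteq> Z\<close>, contradicting full closure of \<open>Z\<close> because \<open>\<lambda>(E) \<le> \<lambda>(Z) \<le> k\<close>.\<close>
lemma fully_closed_absorbs_weak:
  assumes cs: "connectivity_system E lam" and tg: "tangle E lam k T"
    and Z: "fully_closed E lam k T Z" and WZ: "W \<subseteq> Z" and W: "T_strong T W"
    and Y: "T_weak T Y" and WY: "lam (W \<union> Y) \<le> k"
  shows "Y \<subseteq> Z"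
proof (rule ccontr)
  assume nYZ: "\<not> Y \<subseteq> Z"
  have ZE: "Z \<subseteq> E" and Zk: "lam Z \<le> k"
    and Z_closed: "\<And>Y. Y \<subseteq> E - Z \<Longrightarrow> Y \<noteq> {} \<Longrightarrow> T_weak T Y \<Longrightarrow> k < lam (Z \<union> Y)"
    using Z unfolding fully_closed_def k_separating_def not_le[symmetric] by blast+
  have TE: "T \<subseteq> Pow E"
    and T_dichotomy: "\<And>A. A \<subseteq> E \<Longrightarrow> lam A \<le> k - 1 \<Longrightarrow> A \<in> T \<or> E - A \<in> T"
    using tg unfolding tangle_def by auto
  have YE: "Y \<subseteq> E" using Y TE unfolding T_weak_def by blast
  have "k < lam (Z \<union> (Y - Z))"
    using Z_closed[of "Y - Z"] nYZ YE Y by (auto simp: T_weak_def)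
  moreover have "Z \<union> (Y - Z) = Z \<union> (W \<union> Y)" using WZ by auto
  moreover have "lam (Z \<union> (W \<union> Y)) + lam (Z \<inter> (W \<union> Y)) \<le> lam Z + lam (W \<union> Y)"
    using connectivity_system_submod[OF cs ZE, of "W \<union> Y"] WZ ZE YE by blast
  ultimately have "lam (Z \<inter> (W \<union> Y)) \<le> k - 1" using Zk WY by simp
  moreover have "Z \<inter> (W \<union> Y) \<notin> T"
    using W WZ unfolding T_strong_def T_weak_def by auto
  ultimately have "E - Z \<inter> (W \<union> Y) \<in> T" using T_dichotomy ZE by blast
  moreover have "E - Z \<subseteq> E - Z \<inter> (W \<union> Y)" by blast
  ultimately have "T_weak T (E - Z)" unfolding T_weak_def by blast
  moreover have "E - Z \<noteq> {}" using nYZ YE by blast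
  ultimately have "k < lam (Z \<union> (E - Z))" using Z_closed by blast
  moreover have "Z \<union> (E - Z) = E" using ZE by auto
  ultimately show False using connectivity_system_lam_ground_le[OF cs ZE] Zk by simp
qed

lemma exists_least_fully_closed_superset:
  assumes cs: "connectivity_system E lam" and tg: "tangle E lam k T"
    and "W \<subseteq> E" and "T_strong T W" and "k_separating lam k W"
  shows "\<exists>M. fully_closed E lam k T M \<and> W \<subseteq> M \<and>
           (\<forall>Z. fully_closed E lam k T Z \<and> W \<subseteq> Z \<longrightarrow> M \<subseteq> Z)"
  using assms(3-5)
proof (induction "card (E - W)" arbitrary: W rule: less_induct)
  case less
  show ?case
  proof (cases "fully_closed E lam k T W")
    case True
    then show ?thesis by blast
  next
    case False
    then obtain Y where Y: "Y \<subseteq> E - W" "Y \<noteq> {}" "T_weak T Y" "lam (W \<union> Y) \<le> k"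
      using less.prems unfolding fully_closed_def k_separating_def by blast
    have "card (E - (W \<union> Y)) < card (E - W)"
      using connectivity_system_finite[OF cs] Y(1,2) by (intro psubset_card_mono) auto
    moreover have "T_strong T (W \<union> Y)"
      using less.prems(2) unfolding T_strong_def T_weak_def by blast
    ultimately obtain M where M: "fully_closed E lam k T M" "W \<union> Y \<subseteq> M"
      "\<forall>Z. fully_closed E lam k T Z \<and> W \<union> Y \<subseteq> Z \<longrightarrow> M \<subseteq> Z"
      using less.hyps[of "W \<union> Y"] less.prems(1) Y(1,4) unfolding k_separating_def by blast
    have "M \<subseteq> Z" if "fully_closed E lam k T Z" "W \<subseteq> Z" for Z
      using fully_closed_absorbs_weak[OF cs tg that less.prems(2) Y(3,4)] M(3) that by blast
    then show ?thesis using M(1,2) by blast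
  qed
qed

theorem corollary3p2:
  fixes E :: "'a set" and lam :: "'a set \<Rightarrow> int" and k :: int
    and T :: "'a set set" and X :: "'a set"
  assumes "connectivity_system E lam"
    and "tangle E lam k T"
    and "X \<subseteq> E" and "T_strong T X" and "k_separating lam k X"
  shows "fully_closed E lam k T (\<Inter> {Z. fully_closed E lam k T Z \<and> X \<subseteq> Z})
         \<and> X \<subseteq> \<Inter> {Z. fully_closed E lam k T Z \<and> X \<subseteq> Z}"
proof -
  obtain M where M: "fully_closed E lam k T M" "X \<subseteq> M"
      "\<forall>Z. fully_closed E lam k T Z \<and> X \<subseteq> Z \<longrightarrow> M \<subseteq> Z"
    using exists_least_fully_closed_superset[OF assms] by blast
  then have "\<Inter> {Z. fully_closed E lam k T Z \<and> X \<subseteq> Z} = M"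
    by (intro antisym Inter_lower Inter_greatest) auto
  then show ?thesis using M(1,2) by simp
qed

end
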